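(* Let $G$ be a finite group. If $o(G)<o(S_3)=\frac{13}{6}$, then $G$ is an elementary abelian $2$-group. Moreover, if $o(G)=\frac{13}{6}$, then $G\cong S_3$.
   Context: For a finite group $G$, $|x|$ denotes the order of an element $x$, $\psi(G)=\sum_{x\in G}|x|$, and $o(G)=\psi(G)/|G|$ (the average element order). $S_3$ is the symmetric group of degree $3$. *)

theory Defs
  imports "HOL-Algebra.Algebra"
begin

definition psi_ord :: "('a, 'b) monoid_scheme \<Rightarrow> nat" where
  "psi_ord G = (\<Sum>x\<in>carrier G. group.ord G x)"

definition avg_ord :: "('a, 'b) monoid_scheme \<Rightarrow> real" where
  "avg_ord G = real (psi_ord G) / real (order G)"

definition elem_abelian_2group :: "('a, 'b) monoid_scheme \<Rightarrow> bool" where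
  "elem_abelian_2group G \<longleftrightarrow> comm_group G \<and> (\<forall>x\<in>carrier G. x [^]\<^bsub>G\<^esub> (2::nat) = \<one>\<^bsub>G\<^esub>)"

end

theory Submission
  imports Defs "HOL-Library.Z2" "HOL-Library.Disjoint_Sets"
begin

text \<open>
  Split G into the set S of solutions of x^2 = 1 and its complement R. Then
  psi(G) + 1 = 2|S| + (sum of ord x over R), where every such ord x is at least 3 and divides |G|.
  If |S| > 3|G|/4, then for each x in S the sets S and xS meet in more than |G|/2 elements, all
  commuting with x; so S is central, hence a subgroup, hence all of G, and G is elementary abelian
  with average order below 2. Otherwise |R| >= |G|/4, |R| is even (inversion pairs off R), and a
  short computation gives 13|G| <= 6 psi(G), with equality only if |G| = 6, |S| = 4 and every element
  of R has order 3. In that case conjugation on the three involutions is faithful (a central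
  involution would yield a Klein four-subgroup, a central element of order 3 an element of order 6),
  which embeds G into S_3, and both have order 6.
\<close>

lemma even_card_if_fixpoint_free_involution:
  assumes "\<And>x. x \<in> A \<Longrightarrow> f x \<in> A" "\<And>x. x \<in> A \<Longrightarrow> f (f x) = x" "\<And>x. x \<in> A \<Longrightarrow> f x \<noteq> x"
  shows "even (card A)"
proof -
  have "(\<Sum>x\<in>A. 1 :: bit) = 0"
    by (rule sum_involution_eq_0[where h = f]) (use assms in auto)
  then have "even (of_nat (card A) :: bit)"
    by simp
  then show ?thesis
    by (simp only: even_of_nat_iff)
qed

lemma psi_ord_bound_arith:
  fixes n s r q p :: nat
  assumes p: "p + 1 = 2 * s + q" and n: "s + r = n" and s: "4 * s \<le> 3 * n"
    and r: "even r" "1 \<le> r" and q: "3 * r \<le> q" "\<not> 3 dvd n \<Longrightarrow> 4 * r \<le> q"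
  shows "13 * n \<le> 6 * p \<and> (13 * n = 6 * p \<longrightarrow> n = 6 \<and> s = 4 \<and> q = 3 * r)"
proof -
  have "r = 2 \<or> 4 \<le> r"
    using r by presburger
  moreover have "13 * n < 6 * p" if "4 \<le> r"
    using that p n s q(1) by linarith
  moreover have "13 * n < 6 * p" if "r = 2" "\<not> 3 dvd n"
    using that p n s q by linarith
  moreover have "s = 1 \<or> s = 4" if "r = 2" "3 dvd n"
    using that n s by presburger
  ultimately show ?thesis
    using p n q(1) by fastforce
qed

lemma sum_eq_mult_card_imp_eq:
  fixes f :: "'a \<Rightarrow> nat"
  assumes "finite A" "\<And>x. x \<in> A \<Longrightarrow> k \<le> f x" "sum f A = k * card A" "x \<in> A"
  shows "f x = k"
proof -
  have "(\<Sum>x\<in>A. f x - k) = sum f A - k * card A"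
    using sum_subtractf_nat[of A "\<lambda>_. k" f] assms(2) by (simp add: mult.commute)
  then have "(\<Sum>x\<in>A. f x - k) = 0"
    using assms(3) by simp
  then have "f x - k = 0"
    using assms(1,4) by (simp add: sum_eq_0_iff)
  then show ?thesis
    using assms(2)[OF assms(4)] by simp
qed

context group
begin

lemma ord_eq_prime:
  fixes p :: nat
  assumes "x \<in> carrier G" "Factorial_Ring.prime p" "x [^] p = \<one>" "x \<noteq> \<one>"
  shows "ord x = p"
proof -
  have "ord x dvd p"
    using assms pow_eq_id by blast
  then show ?thesis
    using assms ord_eq_1 prime_nat_iff by auto
qed

lemma ord_eq_2_if_square_eq_one:
  assumes "x \<in> carrier G" "x \<otimes> x = \<one>" "x \<noteq> \<one>"
  shows "ord x = 2"
  using assms by (intro ord_eq_prime two_is_prime_nat) (simp_all add: numeral_2_eq_2)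

lemma inv_mult_cancel_left:
  assumes "x \<in> carrier G" "a \<in> carrier G"
  shows "inv x \<otimes> (x \<otimes> a) = a"
  using assms by (simp flip: m_assoc)

lemma inv_eq_self_iff_square_eq_one:
  assumes "x \<in> carrier G"
  shows "inv x = x \<longleftrightarrow> x \<otimes> x = \<one>"
  using assms inv_equality r_inv by metis

lemma commute_if_squares_eq_one:
  assumes "x \<in> carrier G" "y \<in> carrier G"
    and "x \<otimes> x = \<one>" "y \<otimes> y = \<one>" "(x \<otimes> y) \<otimes> (x \<otimes> y) = \<one>"
  shows "x \<otimes> y = y \<otimes> x"
proof -
  have "x \<otimes> y = inv (x \<otimes> y)"
    using assms inv_eq_self_iff_square_eq_one[of "x \<otimes> y"] by simp
  also have "\<dots> = inv y \<otimes> inv x"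
    using assms by (simp add: inv_mult_group)
  also have "\<dots> = y \<otimes> x"
    using assms by (simp flip: inv_eq_self_iff_square_eq_one)
  finally show ?thesis .
qed

lemma comm_group_if_squares_eq_one:
  assumes "\<And>x. x \<in> carrier G \<Longrightarrow> x \<otimes> x = \<one>"
  shows "comm_group G"
  using assms commute_if_squares_eq_one by (intro group_comm_groupI) auto

lemma subgroup_eq_carrier_if_card_gt_half:
  assumes "finite (carrier G)" "subgroup H G" "order G < 2 * card H"
  shows "H = carrier G"
proof -
  have lagrange: "card (rcosets H) * card H = order G"
    using lagrange[OF assms(2)] .
  have "order G > 0"
    using assms(1) order_gt_0_iff_finite by blast
  then have "card (rcosets H) \<noteq> 0"
    using lagrange by (cases "card (rcosets H)") auto
  moreover have "card (rcosets H) < 2"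
  proof (rule ccontr)
    assume "\<not> card (rcosets H) < 2"
    then have "2 * card H \<le> card (rcosets H) * card H"
      by simp
    then show False
      using lagrange assms(3) by linarith
  qed
  ultimately have "card (rcosets H) = 1"
    by linarith
  then have "card H = card (carrier G)"
    using lagrange by (simp add: order_def)
  then show ?thesis
    using card_subset_eq[OF assms(1) subgroup.subset[OF assms(2)]] by simp
qed

lemma subgroup_centralizer:
  assumes "x \<in> carrier G"
  shows "subgroup {y \<in> carrier G. x \<otimes> y = y \<otimes> x} G"
proof (rule subgroupI)
  fix a assume "a \<in> {y \<in> carrier G. x \<otimes> y = y \<otimes> x}"
  then have a: "a \<in> carrier G" "x \<otimes> a = a \<otimes> x" by auto
  have "x \<otimes> inv a = inv a \<otimes> (a \<otimes> x) \<otimes> inv a"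
    using a assms by (simp add: m_assoc[symmetric])
  also have "\<dots> = inv a \<otimes> x"
    using a assms by (simp add: m_assoc flip: a(2))
  finally show "inv a \<in> {y \<in> carrier G. x \<otimes> y = y \<otimes> x}"
    using a by simp
next
  fix a b assume "a \<in> {y \<in> carrier G. x \<otimes> y = y \<otimes> x}" "b \<in> {y \<in> carrier G. x \<otimes> y = y \<otimes> x}"
  then show "a \<otimes> b \<in> {y \<in> carrier G. x \<otimes> y = y \<otimes> x}"
    using assms by (simp add: m_assoc flip: m_assoc[of x])
qed (use assms in auto)

lemma commute_with_involution_if_card_gt_three_quarters:
  assumes fin: "finite (carrier G)"
    and big: "3 * order G < 4 * card {x \<in> carrier G. x \<otimes> x = \<one>}"
    and x: "x \<in> carrier G" "x \<otimes> x = \<one>" and y: "y \<in> carrier G"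
  shows "x \<otimes> y = y \<otimes> x"
proof -
  define S where "S = {x \<in> carrier G. x \<otimes> x = \<one>}"
  define C where "C = {y \<in> carrier G. x \<otimes> y = y \<otimes> x}"
  have S_sub: "S \<subseteq> carrier G" and xS_sub: "(\<otimes>) x ` S \<subseteq> carrier G"
    using x by (auto simp: S_def)
  have "card ((\<otimes>) x ` S) = card S"
    using inj_on_subset[OF inj_on_cmult[OF x(1)] S_sub] by (rule card_image)
  moreover have "card (S \<union> (\<otimes>) x ` S) \<le> order G"
    unfolding order_def using S_sub xS_sub by (intro card_mono fin) auto
  moreover have "finite S"
    using S_sub fin finite_subset by blast
  ultimately have "2 * card S \<le> order G + card (S \<inter> (\<otimes>) x ` S)"
    using card_Un_Int[of S "(\<otimes>) x ` S"] by simp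
  moreover have "S \<inter> (\<otimes>) x ` S \<subseteq> C"
  proof
    fix z assume "z \<in> S \<inter> (\<otimes>) x ` S"
    then obtain s where "z \<in> S" "s \<in> S" "z = x \<otimes> s"
      by auto
    moreover have "x \<otimes> z = s"
      using calculation x S_sub by (auto simp: m_assoc[symmetric])
    ultimately show "z \<in> C"
      using x commute_if_squares_eq_one[of x z] by (auto simp: S_def C_def)
  qed
  then have "card (S \<inter> (\<otimes>) x ` S) \<le> card C"
    using fin by (intro card_mono) (auto simp: C_def)
  ultimately have "order G < 2 * card C"
    using big unfolding S_def by linarith
  then have "C = carrier G"
    using subgroup_eq_carrier_if_card_gt_half[OF fin subgroup_centralizer[OF x(1)]]
    by (simp add: C_def)
  then show ?thesis
    using y by (auto simp: C_def)
qed

lemma squares_eq_one_if_card_gt_three_quarters: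
  assumes fin: "finite (carrier G)"
    and big: "3 * order G < 4 * card {x \<in> carrier G. x \<otimes> x = \<one>}"
  shows "\<forall>x\<in>carrier G. x \<otimes> x = \<one>"
proof -
  let ?S = "{x \<in> carrier G. x \<otimes> x = \<one>}"
  have "subgroup ?S G"
  proof (rule subgroupI)
    fix a b assume "a \<in> ?S" "b \<in> ?S"
    then have a: "a \<in> carrier G" "a \<otimes> a = \<one>" and b: "b \<in> carrier G" "b \<otimes> b = \<one>"
      by auto
    have "(a \<otimes> b) \<otimes> (a \<otimes> b) = a \<otimes> (b \<otimes> a) \<otimes> b"
      using a b by (simp add: m_assoc)
    also have "\<dots> = (a \<otimes> a) \<otimes> (b \<otimes> b)"
      using a b commute_with_involution_if_card_gt_three_quarters[OF fin big b a(1)]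
      by (simp add: m_assoc)
    finally show "a \<otimes> b \<in> ?S"
      using a b by simp
  qed (auto simp flip: inv_eq_self_iff_square_eq_one)
  moreover have "order G < 2 * card ?S"
    using big by linarith
  ultimately show ?thesis
    using subgroup_eq_carrier_if_card_gt_half[OF fin] by blast
qed

lemma card_squares_eq_one_le_three_quarters:
  assumes fin: "finite (carrier G)" and "\<exists>x\<in>carrier G. x \<otimes> x \<noteq> \<one>"
  shows "4 * card {x \<in> carrier G. x \<otimes> x = \<one>} \<le> 3 * order G"
proof (rule ccontr)
  assume "\<not> 4 * card {x \<in> carrier G. x \<otimes> x = \<one>} \<le> 3 * order G"
  then have "\<forall>x\<in>carrier G. x \<otimes> x = \<one>"
    by (intro squares_eq_one_if_card_gt_three_quarters[OF fin]) simp
  then show False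
    using assms(2) by blast
qed

lemma ord_ge_3_if_square_ne_one:
  assumes "finite (carrier G)" "x \<in> carrier G" "x \<otimes> x \<noteq> \<one>"
  shows "3 \<le> ord x"
proof -
  have "ord x \<noteq> 1"
    using assms ord_eq_1 by auto
  moreover have "ord x \<noteq> 2"
    using assms pow_eq_id[of x 2] by (auto simp: numeral_2_eq_2)
  ultimately show ?thesis
    using ord_ge_1[OF assms(1,2)] by linarith
qed

lemma even_card_square_ne_one: "even (card {x \<in> carrier G. x \<otimes> x \<noteq> \<one>})"
proof (rule even_card_if_fixpoint_free_involution[where f = "\<lambda>x. inv x"])
  fix x assume x: "x \<in> {x \<in> carrier G. x \<otimes> x \<noteq> \<one>}"
  then show "inv x \<noteq> x"
    using inv_eq_self_iff_square_eq_one by blast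
  show "inv (inv x) = x"
    using x by simp
  have "inv x \<otimes> inv x = inv (x \<otimes> x)"
    using x by (simp add: inv_mult_group)
  then show "inv x \<in> {x \<in> carrier G. x \<otimes> x \<noteq> \<one>}"
    using x by simp
qed

lemma psi_ord_split:
  assumes fin: "finite (carrier G)"
  shows "psi_ord G + 1 = 2 * card {x \<in> carrier G. x \<otimes> x = \<one>}
                        + (\<Sum>x\<in>{x \<in> carrier G. x \<otimes> x \<noteq> \<one>}. ord x)"
proof -
  define S where "S = {x \<in> carrier G. x \<otimes> x = \<one>}"
  define R where "R = {x \<in> carrier G. x \<otimes> x \<noteq> \<one>}"
  have "finite S" "finite R" "\<one> \<in> S"
    using fin by (auto simp: S_def R_def)
  have "carrier G = S \<union> R" "S \<inter> R = {}"
    by (auto simp: S_def R_def)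
  then have "psi_ord G = sum ord S + sum ord R"
    unfolding psi_ord_def using sum.union_disjoint[OF \<open>finite S\<close> \<open>finite R\<close>] by simp
  moreover have "sum ord S = 1 + sum ord (S - {\<one>})"
    using sum.remove[OF \<open>finite S\<close> \<open>\<one> \<in> S\<close>, of ord] by simp
  moreover have "sum ord (S - {\<one>}) = 2 * (card S - 1)"
    using \<open>finite S\<close> \<open>\<one> \<in> S\<close> by (simp add: S_def ord_eq_2_if_square_eq_one)
  moreover have "card S > 0"
    using \<open>finite S\<close> \<open>\<one> \<in> S\<close> card_gt_0_iff by blast
  ultimately show ?thesis
    unfolding S_def[symmetric] R_def[symmetric] by simp
qed

lemma psi_ord_lower_bound:
  assumes fin: "finite (carrier G)" and "\<exists>x\<in>carrier G. x \<otimes> x \<noteq> \<one>"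
  shows "13 * order G \<le> 6 * psi_ord G \<and>
    (13 * order G = 6 * psi_ord G \<longrightarrow> order G = 6 \<and> card {x \<in> carrier G. x \<otimes> x = \<one>} = 4
       \<and> (\<forall>x\<in>carrier G. x \<otimes> x \<noteq> \<one> \<longrightarrow> ord x = 3))"
proof -
  define S where "S = {x \<in> carrier G. x \<otimes> x = \<one>}"
  define R where "R = {x \<in> carrier G. x \<otimes> x \<noteq> \<one>}"
  define Q where "Q = (\<Sum>x\<in>R. ord x)"
  have "finite S" "finite R" "R \<noteq> {}"
    using fin assms(2) by (auto simp: S_def R_def)
  have R_ord: "3 \<le> ord x" "ord x dvd order G" if "x \<in> R" for x
    using that ord_ge_3_if_square_ne_one[OF fin] ord_dvd_group_order by (auto simp: R_def)
  have psi: "psi_ord G + 1 = 2 * card S + Q"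
    using psi_ord_split[OF fin] by (simp add: S_def R_def Q_def)
  have "carrier G = S \<union> R" "S \<inter> R = {}"
    by (auto simp: S_def R_def)
  then have card: "card S + card R = order G"
    unfolding order_def using card_Un_disjoint[OF \<open>finite S\<close> \<open>finite R\<close>] by simp
  have S_small: "4 * card S \<le> 3 * order G"
    using card_squares_eq_one_le_three_quarters[OF assms] by (simp add: S_def)
  have R_even: "even (card R)"
    using even_card_square_ne_one by (simp add: R_def)
  have R_nonempty: "1 \<le> card R"
    using \<open>finite R\<close> \<open>R \<noteq> {}\<close> by (simp add: Suc_le_eq card_gt_0_iff)
  have Q3: "3 * card R \<le> Q"
    using sum_bounded_below[of R 3 ord] R_ord by (simp add: Q_def mult.commute)
  have Q4: "4 * card R \<le> Q" if "\<not> 3 dvd order G"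
  proof -
    have "4 \<le> ord x" if "x \<in> R" for x
      using R_ord[OF that] \<open>\<not> 3 dvd order G\<close> by (cases "ord x = 3") auto
    then show ?thesis
      using sum_bounded_below[of R 4 ord] by (simp add: Q_def mult.commute)
  qed
  have bound: "13 * order G \<le> 6 * psi_ord G \<and>
      (13 * order G = 6 * psi_ord G \<longrightarrow> order G = 6 \<and> card S = 4 \<and> Q = 3 * card R)"
    using psi_ord_bound_arith[OF psi card S_small R_even R_nonempty Q3 Q4] .
  have "ord x = 3" if "Q = 3 * card R" "x \<in> R" for x
    using sum_eq_mult_card_imp_eq[OF \<open>finite R\<close> _ _ that(2)] R_ord(1) that(1) by (simp add: Q_def)
  then have "Q = 3 * card R \<Longrightarrow> \<forall>x\<in>carrier G. x \<otimes> x \<noteq> \<one> \<longrightarrow> ord x = 3"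
    by (simp add: R_def)
  then show ?thesis
    using bound unfolding S_def by blast
qed

lemma iso_sym_group_if_faithful_action:
  fixes act :: "'a \<Rightarrow> 'c \<Rightarrow> 'c" and \<beta> :: "nat \<Rightarrow> 'c"
  assumes \<beta>: "bij_betw \<beta> {1..n} T"
    and act_closed: "\<And>x t. x \<in> carrier G \<Longrightarrow> t \<in> T \<Longrightarrow> act x t \<in> T"
    and act_mult: "\<And>x y t. x \<in> carrier G \<Longrightarrow> y \<in> carrier G \<Longrightarrow> t \<in> T \<Longrightarrow>
                     act (x \<otimes> y) t = act x (act y t)"
    and act_one: "\<And>t. t \<in> T \<Longrightarrow> act \<one> t = t"
    and faithful: "\<And>x. x \<in> carrier G \<Longrightarrow> \<forall>t\<in>T. act x t = t \<Longrightarrow> x = \<one>"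
    and order: "order G = fact n"
  shows "G \<cong> sym_group n"
proof -
  define I where "I = {1..n}"
  define \<phi> where "\<phi> x k = (if k \<in> I then inv_into I \<beta> (act x (\<beta> k)) else k)" for x k
  have \<beta>_inv: "inv_into I \<beta> t \<in> I" "\<beta> (inv_into I \<beta> t) = t" if "t \<in> T" for t
    using that bij_betw_apply[OF bij_betw_inv_into[OF \<beta>]] bij_betw_inv_into_right[OF \<beta>]
    by (auto simp: I_def)
  have \<beta>_in: "\<beta> k \<in> T" "inv_into I \<beta> (\<beta> k) = k" if "k \<in> I" for k
    using that bij_betw_apply[OF \<beta>] bij_betw_inv_into_left[OF \<beta>] by (auto simp: I_def)
  have \<phi>_mult: "\<phi> (x \<otimes> y) = \<phi> x \<circ> \<phi> y" if "x \<in> carrier G" "y \<in> carrier G" for x y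
    using that by (auto simp: \<phi>_def fun_eq_iff act_mult act_closed \<beta>_in \<beta>_inv)
  have \<phi>_one: "\<phi> \<one> = id"
    by (auto simp: \<phi>_def fun_eq_iff act_one \<beta>_in)
  have "\<phi> x permutes {1..n}" if "x \<in> carrier G" for x
  proof -
    have "bij (\<phi> x)"
      using \<phi>_mult[of x "inv x"] \<phi>_mult[of "inv x" x] \<phi>_one that
      by (intro o_bij[where g = "\<phi> (inv x)"]) auto
    then show ?thesis
      by (auto simp: permutes_def bij_iff \<phi>_def I_def)
  qed
  then have "\<phi> \<in> hom G (sym_group n)"
    by (auto simp: hom_def sym_group_carrier sym_group_mult \<phi>_mult)
  then interpret \<phi>: group_hom G "sym_group n" \<phi>
    by (intro group_hom.intro group_hom_axioms.intro is_group sym_group_is_group)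
  have "\<forall>t\<in>T. act x t = t" if "x \<in> carrier G" "\<phi> x = id" for x
  proof
    fix t assume "t \<in> T"
    then have "\<phi> x (inv_into I \<beta> t) = inv_into I \<beta> t"
      using that(2) by simp
    then show "act x t = t"
      using \<open>t \<in> T\<close> \<beta>_inv[of t] \<beta>_inv[of "act x t"] act_closed[OF that(1)] by (simp add: \<phi>_def)
  qed
  then have "kernel G (sym_group n) \<phi> = {\<one>}"
    using faithful by (auto simp: kernel_def sym_group_one)
  then have inj: "inj_on \<phi> (carrier G)"
    by (rule \<phi>.trivial_ker_imp_inj)
  have "finite (carrier (sym_group n))"
    by (simp add: sym_group_def finite_permutations)
  moreover have "card (\<phi> ` carrier G) = card (carrier (sym_group n))"
    using card_image[OF inj] order by (simp add: order_def sym_group_card_carrier)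
  ultimately have "\<phi> ` carrier G = carrier (sym_group n)"
    using \<phi>.hom_closed by (intro card_subset_eq) auto
  then show ?thesis
    using inj \<open>\<phi> \<in> hom G (sym_group n)\<close> by (auto intro!: is_isoI isoI simp: bij_betw_def)
qed

lemma four_dvd_order_if_commuting_involutions:
  assumes z: "z \<in> carrier G" "z \<otimes> z = \<one>" "z \<noteq> \<one>"
    and t: "t \<in> carrier G" "t \<otimes> t = \<one>" "t \<noteq> \<one>" "t \<noteq> z"
    and comm: "z \<otimes> t = t \<otimes> z"
  shows "4 dvd order G"
proof -
  have swap: "t \<otimes> (z \<otimes> a) = z \<otimes> (t \<otimes> a)" if "a \<in> carrier G" for a
    using that z t by (simp add: comm flip: m_assoc)
  have cancel: "z \<otimes> (z \<otimes> a) = a" "t \<otimes> (t \<otimes> a) = a" if "a \<in> carrier G" for a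
    using that z t by (simp_all flip: m_assoc)
  define w where "w = z \<otimes> t"
  have w: "w \<in> carrier G" "w \<otimes> w = \<one>"
    using z t by (simp_all add: w_def m_assoc swap cancel)
  have products: "z \<otimes> w = t" "w \<otimes> z = t" "t \<otimes> w = z" "w \<otimes> t = z" "t \<otimes> z = w"
    using z t by (simp_all add: w_def m_assoc swap cancel flip: comm)
  have "w \<noteq> \<one>" "w \<noteq> z" "w \<noteq> t"
    using products(1,2,4) z t by auto
  define H where "H = {\<one>, z, t, w}"
  have "subgroup H G"
  proof (rule subgroupI)
    show "inv a \<in> H" if "a \<in> H" for a
      using that z t w by (auto simp: H_def inv_eq_self_iff_square_eq_one[symmetric])
    show "a \<otimes> b \<in> H" if "a \<in> H" "b \<in> H" for a b
    proof -
      have "a = \<one> \<or> a = z \<or> a = t \<or> a = w" "b = \<one> \<or> b = z \<or> b = t \<or> b = w"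
        using that by (auto simp: H_def)
      then show ?thesis
        using z t w products by (elim disjE) (simp_all add: H_def flip: w_def)
    qed
  qed (use z t w in \<open>auto simp: H_def\<close>)
  moreover have "card H = 4"
    using z t \<open>w \<noteq> \<one>\<close> \<open>w \<noteq> z\<close> \<open>w \<noteq> t\<close> by (auto simp: H_def)
  ultimately show ?thesis
    using lagrange by (metis dvd_triv_right)
qed

lemma eq_one_if_commutes_with_involutions:
  assumes order: "order G = 6"
    and ord3: "\<forall>x\<in>carrier G. x \<otimes> x \<noteq> \<one> \<longrightarrow> ord x = 3"
    and involutions: "2 \<le> card {t \<in> carrier G. t \<otimes> t = \<one> \<and> t \<noteq> \<one>}"
    and z: "z \<in> carrier G"
    and comm: "\<And>t. t \<in> carrier G \<Longrightarrow> t \<otimes> t = \<one> \<Longrightarrow> z \<otimes> t = t \<otimes> z"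
  shows "z = \<one>"
proof (rule ccontr)
  assume "z \<noteq> \<one>"
  have "\<not> {t \<in> carrier G. t \<otimes> t = \<one> \<and> t \<noteq> \<one>} \<subseteq> {z}"
    using card_mono[of "{z}" "{t \<in> carrier G. t \<otimes> t = \<one> \<and> t \<noteq> \<one>}"] involutions by auto
  then obtain t where t: "t \<in> carrier G" "t \<otimes> t = \<one>" "t \<noteq> \<one>" "t \<noteq> z"
    by blast
  show False
  proof (cases "z \<otimes> z = \<one>")
    case True
    then have "4 dvd order G"
      using four_dvd_order_if_commuting_involutions[OF z True \<open>z \<noteq> \<one>\<close> t] comm[OF t(1,2)] by blast
    then show False
      using order by simp
  next
    case False
    \<comment> \<open>\<open>(z \<otimes> t)\<^sup>2 = z\<^sup>2 \<noteq> \<one>\<close> forces \<open>ord (z \<otimes> t) = 3\<close>, but \<open>(z \<otimes> t)\<^sup>3 = t\<close>\<close>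
    have distrib: "(z \<otimes> t) [^] n = z [^] n \<otimes> t [^] n" for n :: nat
      using pow_mult_distrib[OF comm[OF t(1,2)] z t(1)] .
    have "(z \<otimes> t) [^] (2::nat) = z \<otimes> z" "(z \<otimes> t) [^] (3::nat) = z [^] (3::nat) \<otimes> t"
      using z t distrib[of 2] distrib[of 3] by (simp_all add: numeral_2_eq_2 numeral_3_eq_3)
    moreover have "ord z = 3" "ord (z \<otimes> t) = 3"
      using ord3 z t False calculation(1) by (auto simp: numeral_2_eq_2)
    ultimately have "t = \<one>"
      using z t pow_ord_eq_1[of z] pow_ord_eq_1[of "z \<otimes> t"] by simp
    then show False
      using t by simp
  qed
qed

lemma conj_involution:
  assumes "x \<in> carrier G" "t \<in> carrier G" "t \<otimes> t = \<one>" "t \<noteq> \<one>"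
  shows "x \<otimes> t \<otimes> inv x \<in> carrier G" "(x \<otimes> t \<otimes> inv x) \<otimes> (x \<otimes> t \<otimes> inv x) = \<one>"
    "x \<otimes> t \<otimes> inv x \<noteq> \<one>"
proof -
  show "x \<otimes> t \<otimes> inv x \<in> carrier G"
    using assms by simp
  have "(x \<otimes> t \<otimes> inv x) \<otimes> (x \<otimes> t \<otimes> inv x) = x \<otimes> (t \<otimes> t) \<otimes> inv x"
    using assms(1,2) by (simp add: m_assoc inv_mult_cancel_left)
  then show "(x \<otimes> t \<otimes> inv x) \<otimes> (x \<otimes> t \<otimes> inv x) = \<one>"
    using assms by simp
  show "x \<otimes> t \<otimes> inv x \<noteq> \<one>"
    using assms by (simp add: inv_solve_right')
qed

lemma iso_sym_group_3_if_order_6: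
  assumes order: "order G = 6"
    and involutions: "card {x \<in> carrier G. x \<otimes> x = \<one>} = 4"
    and ord3: "\<forall>x\<in>carrier G. x \<otimes> x \<noteq> \<one> \<longrightarrow> ord x = 3"
  shows "G \<cong> sym_group 3"
proof -
  have fin: "finite (carrier G)"
    using order order_gt_0_iff_finite by simp
  define T where "T = {t \<in> carrier G. t \<otimes> t = \<one> \<and> t \<noteq> \<one>}"
  have "T = {x \<in> carrier G. x \<otimes> x = \<one>} - {\<one>}"
    by (auto simp: T_def)
  then have "card T = 3"
    using involutions fin by (simp add: card_Diff_singleton)
  then obtain \<beta> :: "nat \<Rightarrow> 'a" where \<beta>: "bij_betw \<beta> {1..3} T"
    using ex_bij_betw_nat_finite_1[of T] fin by (auto simp: T_def)
  show ?thesis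
  proof (rule iso_sym_group_if_faithful_action[OF \<beta>, where act = "\<lambda>x t. x \<otimes> t \<otimes> inv x"])
    show "x \<otimes> t \<otimes> inv x \<in> T" if "x \<in> carrier G" "t \<in> T" for x t
      using that conj_involution[of x t] by (auto simp: T_def)
    show "x \<otimes> y \<otimes> t \<otimes> inv (x \<otimes> y) = x \<otimes> (y \<otimes> t \<otimes> inv y) \<otimes> inv x"
      if "x \<in> carrier G" "y \<in> carrier G" "t \<in> T" for x y t
      using that by (simp add: T_def m_assoc inv_mult_group)
    show "\<one> \<otimes> t \<otimes> inv \<one> = t" if "t \<in> T" for t
      using that by (simp add: T_def)
    show "x = \<one>" if "x \<in> carrier G" "\<forall>t\<in>T. x \<otimes> t \<otimes> inv x = t" for x
    proof (rule eq_one_if_commutes_with_involutions[OF order ord3 _ that(1)])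
      show "2 \<le> card {t \<in> carrier G. t \<otimes> t = \<one> \<and> t \<noteq> \<one>}"
        using \<open>card T = 3\<close> by (simp add: T_def)
      show "x \<otimes> t = t \<otimes> x" if "t \<in> carrier G" "t \<otimes> t = \<one>" for t
      proof (cases "t = \<one>")
        case False
        then show ?thesis
          using that \<open>x \<in> carrier G\<close> \<open>\<forall>t\<in>T. x \<otimes> t \<otimes> inv x = t\<close> by (simp add: T_def inv_solve_right')
      qed (use \<open>x \<in> carrier G\<close> in simp)
    qed
    show "order G = fact 3"
      using order by (simp add: fact_numeral)
  qed
qed

end

lemma psi_ord_sym_group_3: "psi_ord (sym_group 3) = 13"
proof -
  interpret S3: group "sym_group 3"
    by (rule sym_group_is_group)
  define t12 where "t12 = Transposition.transpose (1::nat) 2"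
  define t13 where "t13 = Transposition.transpose (1::nat) 3"
  define t23 where "t23 = Transposition.transpose (2::nat) 3"
  define c where "c = (\<lambda>k::nat. if k = 1 then 2 else if k = 2 then 3 else if k = 3 then 1 else k)"
  define elems where "elems = [id, t12, t13, t23, c, c \<circ> c]"
  have "distinct (map (\<lambda>p. (p 1, p 2, p 3)) elems)"
    by (simp add: elems_def c_def t12_def t13_def t23_def transpose_def)
  then have distinct: "distinct elems"
    by (simp only: distinct_map)
  have "t12 permutes {1..3}" "t13 permutes {1..3}" "t23 permutes {1..3}"
    by (simp_all add: t12_def t13_def t23_def permutes_swap_id)
  moreover have "c = t12 \<circ> t23"
    by (auto simp: fun_eq_iff c_def t12_def t23_def transpose_def)
  ultimately have "set elems \<subseteq> carrier (sym_group 3)"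
    by (auto simp: elems_def sym_group_carrier permutes_compose permutes_id)
  moreover have "card (set elems) = card (carrier (sym_group 3))"
    using distinct_card[OF distinct] by (simp add: elems_def sym_group_card_carrier fact_numeral)
  ultimately have carrier: "carrier (sym_group 3) = set elems"
    by (intro card_subset_eq[symmetric]) (simp_all add: sym_group_def finite_permutations)
  have mult: "x \<otimes>\<^bsub>sym_group 3\<^esub> y = x \<circ> y" "\<one>\<^bsub>sym_group 3\<^esub> = id" for x y
    by (simp_all add: sym_group_mult sym_group_one)
  have "t12 \<noteq> id" "t13 \<noteq> id" "t23 \<noteq> id" "c \<noteq> id" "c \<circ> c \<noteq> id"
    by (auto simp: fun_eq_iff c_def t12_def t13_def t23_def transpose_def dest: spec[of _ 1])
  moreover note carrier
  ultimately have "S3.ord t12 = 2" "S3.ord t13 = 2" "S3.ord t23 = 2"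
    by (auto intro!: S3.ord_eq_2_if_square_eq_one
        simp: elems_def mult fun_eq_iff t12_def t13_def t23_def transpose_def)
  moreover have "S3.ord c = 3" "S3.ord (c \<circ> c) = 3"
  proof -
    have cube: "x [^]\<^bsub>sym_group 3\<^esub> (3::nat) = x \<circ> x \<circ> x" for x
      by (simp add: numeral_3_eq_3 sym_group_mult sym_group_one)
    have "c \<circ> c \<circ> c = id"
      by (auto simp: fun_eq_iff c_def)
    moreover from this have "(c \<circ> c) \<circ> (c \<circ> c) \<circ> (c \<circ> c) = id"
      by (simp add: comp_assoc)
    ultimately show "S3.ord c = 3" "S3.ord (c \<circ> c) = 3"
      using \<open>c \<noteq> id\<close> \<open>c \<circ> c \<noteq> id\<close> carrier
      by (auto intro!: S3.ord_eq_prime simp: elems_def cube mult)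
  qed
  ultimately have "map S3.ord elems = [1, 2, 2, 2, 3, 3]"
    using S3.ord_id by (simp add: elems_def mult)
  then show ?thesis
    unfolding psi_ord_def carrier sum.distinct_set_conv_list[OF distinct] by simp
qed

lemma avg_ord_sym_group_3: "avg_ord (sym_group 3) = 13 / 6"
  by (simp add: avg_ord_def psi_ord_sym_group_3 order_def sym_group_card_carrier fact_numeral)

context group
begin

lemma avg_ord_lt_2_if_squares_eq_one:
  assumes fin: "finite (carrier G)" and "\<forall>x\<in>carrier G. x \<otimes> x = \<one>"
  shows "avg_ord G < 2"
proof -
  have "{x \<in> carrier G. x \<otimes> x = \<one>} = carrier G" "{x \<in> carrier G. x \<otimes> x \<noteq> \<one>} = {}"
    using assms(2) by auto
  then have "psi_ord G + 1 = 2 * order G"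
    using psi_ord_split[OF fin] unfolding order_def by (simp only:) simp
  moreover have "order G > 0"
    using fin order_gt_0_iff_finite by blast
  ultimately show ?thesis
    unfolding avg_ord_def by (simp add: divide_less_eq)
qed

lemma avg_ord_bound_if_square_ne_one:
  assumes fin: "finite (carrier G)" and "\<exists>x\<in>carrier G. x \<otimes> x \<noteq> \<one>"
  shows "13 / 6 \<le> avg_ord G" and "avg_ord G = 13 / 6 \<Longrightarrow> G \<cong> sym_group 3"
proof -
  have pos: "order G > 0"
    using fin order_gt_0_iff_finite by blast
  have "13 / 6 \<le> avg_ord G \<longleftrightarrow> real (13 * order G) \<le> real (6 * psi_ord G)"
    "avg_ord G = 13 / 6 \<longleftrightarrow> real (13 * order G) = real (6 * psi_ord G)"
    unfolding avg_ord_def using pos by (auto simp: field_simps)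
  then have avg: "13 / 6 \<le> avg_ord G \<longleftrightarrow> 13 * order G \<le> 6 * psi_ord G"
    "avg_ord G = 13 / 6 \<longleftrightarrow> 13 * order G = 6 * psi_ord G"
    by (simp_all only: of_nat_le_iff of_nat_eq_iff)
  show "13 / 6 \<le> avg_ord G"
    using psi_ord_lower_bound[OF assms] avg(1) by blast
  show "G \<cong> sym_group 3" if "avg_ord G = 13 / 6"
    using psi_ord_lower_bound[OF assms] avg(2) that iso_sym_group_3_if_order_6 by blast
qed

lemma elem_abelian_2group_if_avg_ord_lt:
  assumes fin: "finite (carrier G)" and "avg_ord G < 13 / 6"
  shows "elem_abelian_2group G"
proof -
  have squares: "\<forall>x\<in>carrier G. x \<otimes> x = \<one>"
    using avg_ord_bound_if_square_ne_one(1)[OF fin] assms(2) by force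
  then have "comm_group G"
    by (simp add: comm_group_if_squares_eq_one)
  then show ?thesis
    using squares by (simp add: elem_abelian_2group_def numeral_2_eq_2)
qed

lemma iso_sym_group_3_if_avg_ord_eq:
  assumes fin: "finite (carrier G)" and "avg_ord G = 13 / 6"
  shows "G \<cong> sym_group 3"
proof -
  have "\<exists>x\<in>carrier G. x \<otimes> x \<noteq> \<one>"
    using avg_ord_lt_2_if_squares_eq_one[OF fin] assms(2) by force
  then show ?thesis
    using avg_ord_bound_if_square_ne_one(2)[OF fin] assms(2) by blast
qed

end

theorem theoremA:
  fixes G :: "('a, 'b) monoid_scheme"
  assumes "group G" and "finite (carrier G)"
  shows "avg_ord (sym_group 3) = 13 / 6
    \<and> (avg_ord G < 13 / 6 \<longrightarrow> elem_abelian_2group G)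
    \<and> (avg_ord G = 13 / 6 \<longrightarrow> G \<cong> sym_group 3)"
  using avg_ord_sym_group_3 group.elem_abelian_2group_if_avg_ord_lt[OF assms]
    group.iso_sym_group_3_if_avg_ord_eq[OF assms] by blast

end
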